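(* The system ($m\mathcal{H}1$) $$u_2=v+t\frac{p-q}{s-t},\qquad v_1=u+s\frac{p-q}{s-t},\qquad s_2=\frac{1}{t}+\frac{p-q}{t(u-v)},\qquad t_1=\frac{1}{s}+\frac{p-q}{s(u-v)},$$ together with the constraint $tu=sv$ (or equivalently with the constraint $s_2u_2=t_1v_1$), leads to the integrable lattice equation $H1$: $(x_{12}-x)(x_1-x_2)=p-q$; that is, there is a potential function $x$ on the vertices with $u=x_1x$, $v=x_2x$, $s=x_1/x$, $t=x_2/x$, and in terms of $x$ the system is exactly $H1$.
   Context: $u,s$ are functions on horizontal edges and $v,t$ on vertical edges of the $\mathbb{Z}^2$ graph; for a square with lower-left vertex $(m,n)$, $u,s$ sit on the bottom edge, $v,t$ on the left edge, $u_2,s_2$ on the top edge, $v_1,t_1$ on the right edge; $p$ depends only on $m$, $q$ only on $n$. For a vertex function, $x=x_{m,n}$, $x_1=x_{m+1,n}$, $x_2=x_{m,n+1}$, $x_{12}=x_{m+1,n+1}$. *)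

theory Defs
  imports Complex_Main
begin

end

theory Submission
  imports Defs
begin

(*
  Write w = u/s. The constraint tu = sv says v = tw, and the four evolution equations say that
  the products s_2 t and t_1 s both equal 1 + (p - q)/(u - v); so (s, t) is a closed multiplicative
  1-form on the lattice and has a potential x, with x_1 = s x and x_2 = t x. The same equations give
  w_1 = s^2 w and w_2 = t^2 w, which are also the recurrences of x^2; normalising x(0,0) to a square
  root of w(0,0) therefore yields x^2 = w, i.e. u = x_1 x and v = x_2 x. Finally
  (x_12 - x)(x_1 - x_2) = (t_1 s - 1)(s - t) w = p - q, which is H1.
*)

definition cumulative_prod :: "(int \<Rightarrow> 'a::field) \<Rightarrow> int \<Rightarrow> 'a" where
  "cumulative_prod a k =
     (if 0 \<le> k then \<Prod>i\<in>{0..<k}. a i else inverse (\<Prod>i\<in>{k..<0}. a i))"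

lemma cumulative_prod_0 [simp]: "cumulative_prod a 0 = 1"
  by (simp add: cumulative_prod_def)

lemma cumulative_prod_succ:
  assumes a_nonzero: "\<And>k. a k \<noteq> 0"
  shows "cumulative_prod a (k+1) = a k * cumulative_prod a k"
proof -
  consider "0 \<le> k" | "k = -1" | "k < -1" by linarith
  then show ?thesis
  proof cases
    case 1
    then have "{0..<k+1} = insert k {0..<k}" by auto
    with 1 show ?thesis by (simp add: cumulative_prod_def)
  next
    case 2
    moreover have "{-1..<0::int} = {-1}" by auto
    ultimately show ?thesis by (simp add: cumulative_prod_def a_nonzero)
  next
    case 3
    then have "{k..<0} = insert k {k+1..<0}" by auto
    with 3 show ?thesis by (simp add: cumulative_prod_def a_nonzero)
  qed
qed

lemma int_recurrence_unique:
  fixes a f g :: "int \<Rightarrow> 'a::field"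
  assumes a_nonzero: "\<And>k. a k \<noteq> 0"
    and f_rec: "\<And>k. f (k+1) = a k * f k"
    and g_rec: "\<And>k. g (k+1) = a k * g k"
    and "f 0 = g 0"
  shows "f k = g k"
proof (induction k rule: int_induct[where k = 0])
  case base
  show ?case by fact
next
  case (step1 i)
  then show ?case by (simp add: f_rec g_rec)
next
  case (step2 i)
  then have "a (i-1) * f (i-1) = a (i-1) * g (i-1)"
    using f_rec[of "i-1"] g_rec[of "i-1"] by simp
  then show ?case using a_nonzero[of "i-1"] by simp
qed

lemma lattice_recurrence_unique:
  fixes a b F G :: "int \<Rightarrow> int \<Rightarrow> 'a::field"
  assumes a_nonzero: "\<And>m n. a m n \<noteq> 0" and b_nonzero: "\<And>m n. b m n \<noteq> 0"
    and F_rec: "\<And>m n. F (m+1) n = a m n * F m n" "\<And>m n. F m (n+1) = b m n * F m n"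
    and G_rec: "\<And>m n. G (m+1) n = a m n * G m n" "\<And>m n. G m (n+1) = b m n * G m n"
    and "F 0 0 = G 0 0"
  shows "F m n = G m n"
proof -
  have column_0: "F m 0 = G m 0"
    by (rule int_recurrence_unique[where a = "\<lambda>m. a m 0" and f = "\<lambda>m. F m 0"
          and g = "\<lambda>m. G m 0"]) (simp_all add: assms)
  show ?thesis
    by (rule int_recurrence_unique[where a = "b m" and f = "F m" and g = "G m"])
      (simp_all add: assms column_0)
qed

lemma lattice_potential_exists:
  fixes g h :: "int \<Rightarrow> int \<Rightarrow> 'a::field"
  assumes g_nonzero: "\<And>m n. g m n \<noteq> 0" and h_nonzero: "\<And>m n. h m n \<noteq> 0"
    and closed: "\<And>m n. h (m+1) n * g m n = g m (n+1) * h m n"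
  obtains y where "y 0 0 = c"
    and "\<And>m n. y (m+1) n = g m n * y m n" and "\<And>m n. y m (n+1) = h m n * y m n"
proof -
  define A where "A = cumulative_prod (\<lambda>m. g m 0)"
  define B where "B m = cumulative_prod (h m)" for m
  have A_0: "A 0 = 1" and B_0: "B m 0 = 1" for m
    by (simp_all add: A_def B_def)
  have A_succ: "A (m+1) = g m 0 * A m" for m
    unfolding A_def by (rule cumulative_prod_succ) (rule g_nonzero)
  have B_succ: "B m (n+1) = h m n * B m n" for m n
    unfolding B_def by (rule cumulative_prod_succ) (rule h_nonzero)
  \<comment> \<open>by closedness both sides solve the recurrence of B (m+1) n in n, and they agree at n = 0\<close>
  have B_shift: "B (m+1) n * g m 0 = g m n * B m n" for m n
    by (rule int_recurrence_unique[where a = "h (m+1)" and f = "\<lambda>n. B (m+1) n * g m 0"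
          and g = "\<lambda>n. g m n * B m n"])
      (simp_all add: h_nonzero B_succ B_0 mult.assoc[symmetric] closed)
  show thesis
  proof (rule that[of "\<lambda>m n. c * A m * B m n"])
    show "c * A 0 * B 0 0 = c" by (simp add: A_0 B_0)
    show "c * A (m+1) * B (m+1) n = g m n * (c * A m * B m n)" for m n
    proof -
      have "c * A (m+1) * B (m+1) n = c * A m * (B (m+1) n * g m 0)"
        by (simp only: A_succ mult_ac)
      also have "\<dots> = c * A m * (g m n * B m n)"
        by (simp only: B_shift)
      finally show ?thesis by (simp only: mult_ac)
    qed
    show "c * A m * B m (n+1) = h m n * (c * A m * B m n)" for m n
      by (simp add: B_succ)
  qed
qed

locale mH1_system =
  fixes u s v t :: "int \<Rightarrow> int \<Rightarrow> complex"
    and p q :: "int \<Rightarrow> complex"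
  assumes nz_s: "\<And>m n. s m n \<noteq> 0"
    and nz_t: "\<And>m n. t m n \<noteq> 0"
    and ne_st: "\<And>m n. s m n \<noteq> t m n"
    and ne_uv: "\<And>m n. u m n \<noteq> v m n"
    and eq_u: "\<And>m n. u m (n+1) = v m n + t m n * (p m - q n) / (s m n - t m n)"
    and eq_v: "\<And>m n. v (m+1) n = u m n + s m n * (p m - q n) / (s m n - t m n)"
    and eq_s: "\<And>m n. s m (n+1) = 1 / t m n + (p m - q n) / (t m n * (u m n - v m n))"
    and eq_t: "\<And>m n. t (m+1) n = 1 / s m n + (p m - q n) / (s m n * (u m n - v m n))"
    and constraint: "\<And>m n. t m n * u m n = s m n * v m n"
begin

definition w :: "int \<Rightarrow> int \<Rightarrow> complex" where
  "w m n = u m n / s m n"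

lemma u_eq: "u m n = s m n * w m n"
  using nz_s[of m n] by (simp add: w_def)

lemma v_eq: "v m n = t m n * w m n"
  using constraint[of m n] nz_s[of m n] by (simp add: w_def field_simps)

lemma u_minus_v: "u m n - v m n = (s m n - t m n) * w m n"
  by (simp add: u_eq v_eq algebra_simps)

lemma w_nonzero: "w m n \<noteq> 0"
  using ne_uv[of m n] u_minus_v[of m n] by auto

lemma t_shift: "t (m+1) n * s m n = 1 + (p m - q n) / (u m n - v m n)"
  unfolding eq_t using nz_s[of m n] by (simp add: distrib_right)

lemma s_shift: "s m (n+1) * t m n = 1 + (p m - q n) / (u m n - v m n)"
  unfolding eq_s using nz_t[of m n] by (simp add: distrib_right)

lemma s_t_closed: "t (m+1) n * s m n = s m (n+1) * t m n"
  by (simp add: t_shift s_shift)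

lemma w_shift_m: "w (m+1) n = (s m n)\<^sup>2 * w m n"
proof -
  have "t (m+1) n * w (m+1) n = v (m+1) n"
    by (simp add: v_eq)
  also have "\<dots> = u m n + s m n * (p m - q n) / (s m n - t m n)"
    by (rule eq_v)
  also have "\<dots> = s m n * w m n * (1 + (p m - q n) / ((s m n - t m n) * w m n))"
    using ne_st[of m n] w_nonzero[of m n] by (simp add: u_eq field_simps)
  also have "\<dots> = s m n * w m n * (t (m+1) n * s m n)"
    by (simp only: t_shift u_minus_v)
  finally show ?thesis
    using nz_t[of "m+1" n] by (simp add: power2_eq_square algebra_simps)
qed

lemma w_shift_n: "w m (n+1) = (t m n)\<^sup>2 * w m n"
proof -
  have "s m (n+1) * w m (n+1) = u m (n+1)"
    by (simp add: u_eq)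
  also have "\<dots> = v m n + t m n * (p m - q n) / (s m n - t m n)"
    by (rule eq_u)
  also have "\<dots> = t m n * w m n * (1 + (p m - q n) / ((s m n - t m n) * w m n))"
    using ne_st[of m n] w_nonzero[of m n] by (simp add: v_eq field_simps)
  also have "\<dots> = t m n * w m n * (s m (n+1) * t m n)"
    by (simp only: s_shift u_minus_v)
  finally show ?thesis
    using nz_s[of m "n+1"] by (simp add: power2_eq_square algebra_simps)
qed

lemma H1_of_potential:
  assumes x_s: "\<And>m n. x (m+1) n = s m n * x m n" and x_t: "\<And>m n. x m (n+1) = t m n * x m n"
    and x_sq: "(x m n)\<^sup>2 = w m n"
  shows "(x (m+1) (n+1) - x m n) * (x (m+1) n - x m (n+1)) = p m - q n"
proof -
  have x_st: "x (m+1) (n+1) = t (m+1) n * s m n * x m n"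
    using x_t[of "m+1" n] x_s[of m n] by simp
  have "(x (m+1) (n+1) - x m n) * (x (m+1) n - x m (n+1))
      = (t (m+1) n * s m n - 1) * (s m n - t m n) * (x m n)\<^sup>2"
    unfolding x_st x_s[of m n] x_t[of m n] by (simp add: power2_eq_square algebra_simps)
  also have "\<dots> = p m - q n"
    using ne_st[of m n] w_nonzero[of m n] by (simp add: t_shift u_minus_v x_sq)
  finally show ?thesis .
qed

end

theorem proposition3p5:
  fixes u s v t :: "int \<Rightarrow> int \<Rightarrow> complex"
    and p q :: "int \<Rightarrow> complex"
  assumes nz_s: "\<And>m n. s m n \<noteq> 0"
    and nz_t: "\<And>m n. t m n \<noteq> 0"
    and ne_st: "\<And>m n. s m n \<noteq> t m n"
    and ne_uv: "\<And>m n. u m n \<noteq> v m n"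
    and eq_u: "\<And>m n. u m (n+1) = v m n + t m n * (p m - q n) / (s m n - t m n)"
    and eq_v: "\<And>m n. v (m+1) n = u m n + s m n * (p m - q n) / (s m n - t m n)"
    and eq_s: "\<And>m n. s m (n+1) = 1 / t m n + (p m - q n) / (t m n * (u m n - v m n))"
    and eq_t: "\<And>m n. t (m+1) n = 1 / s m n + (p m - q n) / (s m n * (u m n - v m n))"
    and constraint: "\<And>m n. t m n * u m n = s m n * v m n"
  shows "\<exists>x :: int \<Rightarrow> int \<Rightarrow> complex.
           (\<forall>m n. x m n \<noteq> 0) \<and>
           (\<forall>m n. u m n = x (m+1) n * x m n \<and> v m n = x m (n+1) * x m n \<and>
                  s m n = x (m+1) n / x m n \<and> t m n = x m (n+1) / x m n) \<and>
           (\<forall>m n. (x (m+1) (n+1) - x m n) * (x (m+1) n - x m (n+1)) = p m - q n)"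
proof -
  interpret mH1_system u s v t p q
    using assms by unfold_locales
  obtain x where x00: "x 0 0 = csqrt (w 0 0)"
    and x_s: "\<And>m n. x (m+1) n = s m n * x m n" and x_t: "\<And>m n. x m (n+1) = t m n * x m n"
    using lattice_potential_exists[where g = s and h = t, OF nz_s nz_t s_t_closed] by metis
  have x_sq: "(x m n)\<^sup>2 = w m n" for m n
    by (rule lattice_recurrence_unique[where a = "\<lambda>m n. (s m n)\<^sup>2" and b = "\<lambda>m n. (t m n)\<^sup>2"])
      (simp_all add: nz_s nz_t x_s x_t x00 w_shift_m w_shift_n power_mult_distrib)
  have x_nonzero: "x m n \<noteq> 0" for m n
    using x_sq[of m n] w_nonzero[of m n] by auto
  show ?thesis
  proof (intro exI conjI allI)
    fix m n
    show "x m n \<noteq> 0" by (rule x_nonzero)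
    show "u m n = x (m+1) n * x m n" "v m n = x m (n+1) * x m n"
      using x_sq[of m n] by (simp_all add: u_eq v_eq x_s x_t power2_eq_square)
    show "s m n = x (m+1) n / x m n" "t m n = x m (n+1) / x m n"
      using x_nonzero[of m n] by (simp_all add: x_s x_t)
    show "(x (m+1) (n+1) - x m n) * (x (m+1) n - x m (n+1)) = p m - q n"
      using x_s x_t x_sq by (rule H1_of_potential)
  qed
qed

end
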